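(* Let $L$ be a right Leibniz algebra and $I$ an ideal of $L$. (1) If $\mathrm{Ann}_L(I)=\{0\}$ (respectively $\mathrm{ran}_L(I)=\{0\}$), then $I$ is essential. (2) If $L$ is semiprime, then $I\cap\mathrm{Ann}_L(I)=\{0\}$ (respectively $I\cap\mathrm{ran}_L(I)=\{0\}$), and $I$ is essential if and only if $\mathrm{Ann}_L(I)=\{0\}$ (respectively if and only if $\mathrm{ran}_L(I)=\{0\}$).
   Context: A right Leibniz algebra satisfies $[x,[y,z]]=[[x,y],z]-[[x,z],y]$. Ideals: subspaces $I$ with $[I,L]\subseteq I$, $[L,I]\subseteq I$. $L$ is semiprime if $[J,J]\ne\{0\}$ for every nonzero ideal $J$. For $H\subseteq L$: $\mathrm{lan}_L(H)=\{x\in L:[x,y]=0\ \forall y\in H\}$, $\mathrm{ran}_L(H)=\{x\in L:[y,x]=0\ \forall y\in H\}$, $\mathrm{Ann}_L(H)=\mathrm{lan}_L(H)\cap\mathrm{ran}_L(H)$. An ideal $I$ is essential if $I\cap J\ne\{0\}$ for every nonzero ideal $J$ of $L$. *)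

theory Defs
  imports Complex_Main
begin

text \<open>The algebra L is the whole type 'v.\<close>

definition right_leibniz_algebra ::
  "('k::field \<Rightarrow> 'v::ab_group_add \<Rightarrow> 'v) \<Rightarrow> ('v \<Rightarrow> 'v \<Rightarrow> 'v) \<Rightarrow> bool" where
  "right_leibniz_algebra scale br \<longleftrightarrow>
     Vector_Spaces.vector_space scale \<and>
     (\<forall>x y z. br (x + y) z = br x z + br y z) \<and>
     (\<forall>x y z. br x (y + z) = br x y + br x z) \<and>
     (\<forall>a x y. br (scale a x) y = scale a (br x y)) \<and>
     (\<forall>a x y. br x (scale a y) = scale a (br x y)) \<and>
     (\<forall>x y z. br x (br y z) = br (br x y) z - br (br x z) y)"

definition lie_ideal ::
  "('k::field \<Rightarrow> 'v::ab_group_add \<Rightarrow> 'v) \<Rightarrow> ('v \<Rightarrow> 'v \<Rightarrow> 'v) \<Rightarrow> 'v set \<Rightarrow> bool" where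
  "lie_ideal scale br I \<longleftrightarrow>
     module.subspace scale I \<and> (\<forall>x\<in>I. \<forall>y. br x y \<in> I \<and> br y x \<in> I)"

definition brset ::
  "('k::field \<Rightarrow> 'v::ab_group_add \<Rightarrow> 'v) \<Rightarrow> ('v \<Rightarrow> 'v \<Rightarrow> 'v) \<Rightarrow> 'v set \<Rightarrow> 'v set \<Rightarrow> 'v set" where
  "brset scale br J K = module.span scale {br x y | x y. x \<in> J \<and> y \<in> K}"

definition semiprime ::
  "('k::field \<Rightarrow> 'v::ab_group_add \<Rightarrow> 'v) \<Rightarrow> ('v \<Rightarrow> 'v \<Rightarrow> 'v) \<Rightarrow> bool" where
  "semiprime scale br \<longleftrightarrow>
     (\<forall>J. lie_ideal scale br J \<and> J \<noteq> {0} \<longrightarrow> brset scale br J J \<noteq> {0})"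

definition lanL :: "('v \<Rightarrow> 'v \<Rightarrow> 'v::zero) \<Rightarrow> 'v set \<Rightarrow> 'v set" where
  "lanL br H = {x. \<forall>y\<in>H. br x y = 0}"

definition ranL :: "('v \<Rightarrow> 'v \<Rightarrow> 'v::zero) \<Rightarrow> 'v set \<Rightarrow> 'v set" where
  "ranL br H = {x. \<forall>y\<in>H. br y x = 0}"

definition AnnL :: "('v \<Rightarrow> 'v \<Rightarrow> 'v::zero) \<Rightarrow> 'v set \<Rightarrow> 'v set" where
  "AnnL br H = lanL br H \<inter> ranL br H"

definition essential_ideal ::
  "('k::field \<Rightarrow> 'v::ab_group_add \<Rightarrow> 'v) \<Rightarrow> ('v \<Rightarrow> 'v \<Rightarrow> 'v) \<Rightarrow> 'v set \<Rightarrow> bool" where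
  "essential_ideal scale br I \<longleftrightarrow>
     lie_ideal scale br I \<and>
     (\<forall>J. lie_ideal scale br J \<and> J \<noteq> {0} \<longrightarrow> I \<inter> J \<noteq> {0})"

end

theory Submission
  imports Defs
begin

(* If I and J are ideals with I \<inter> J = 0, every bracket between them lies in I \<inter> J, so J
   annihilates I; hence a trivial annihilator forces essentiality. Conversely, the Leibniz
   identity makes ran(I) an ideal, and K = I \<inter> ran(I) is an ideal with [K,K] \<subseteq> [I,ran(I)] = 0,
   so semiprimeness gives K = 0; an essential I then forces ran(I) = 0, and with it Ann(I) = 0. *)

lemma right_leibniz_algebra_module:
  "right_leibniz_algebra scale br \<Longrightarrow> module scale"
  unfolding right_leibniz_algebra_def by (simp add: vector_space_def module_def)

lemma right_leibniz_algebra_br_zero: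
  assumes "right_leibniz_algebra scale br"
  shows "br 0 y = 0" and "br x 0 = 0"
proof -
  have "br (0 + 0) y = br 0 y + br 0 y" "br x (0 + 0) = br x 0 + br x 0"
    using assms unfolding right_leibniz_algebra_def by blast+
  then show "br 0 y = 0" "br x 0 = 0" by simp_all
qed

lemma lie_ideal_zero:
  "right_leibniz_algebra scale br \<Longrightarrow> lie_ideal scale br J \<Longrightarrow> 0 \<in> J"
  using module.subspace_0[OF right_leibniz_algebra_module] unfolding lie_ideal_def by blast

lemma lie_ideal_Int:
  assumes "right_leibniz_algebra scale br" "lie_ideal scale br I" "lie_ideal scale br J"
  shows "lie_ideal scale br (I \<inter> J)"
  using assms module.subspace_inter[OF right_leibniz_algebra_module[OF assms(1)]]
  unfolding lie_ideal_def by blast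

lemma zero_in_AnnL:
  "right_leibniz_algebra scale br \<Longrightarrow> 0 \<in> AnnL br H"
  unfolding AnnL_def lanL_def ranL_def by (simp add: right_leibniz_algebra_br_zero)

lemma AnnL_subset_ranL: "AnnL br H \<subseteq> ranL br H"
  unfolding AnnL_def by blast

lemma ranL_lie_ideal:
  assumes L: "right_leibniz_algebra scale br" and I: "lie_ideal scale br I"
  shows "lie_ideal scale br (ranL br I)"
proof -
  have addr: "\<And>x y z. br x (y + z) = br x y + br x z"
   and scr: "\<And>a x y. br x (scale a y) = scale a (br x y)"
   and leib: "\<And>x y z. br x (br y z) = br (br x y) z - br (br x z) y"
    using L unfolding right_leibniz_algebra_def by blast+
  note m = right_leibniz_algebra_module[OF L]
  have sub: "module.subspace scale (ranL br I)"
    unfolding module.subspace_def[OF m] ranL_def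
    using addr scr right_leibniz_algebra_br_zero[OF L] module.scale_zero_right[OF m] by auto
  have "br x y \<in> ranL br I \<and> br y x \<in> ranL br I" if x: "x \<in> ranL br I" for x y
  proof -
    have "br i (br x y) = 0 \<and> br i (br y x) = 0" if i: "i \<in> I" for i
    proof -
      have "br i x = 0" "br (br i y) x = 0"
        using x i I unfolding ranL_def lie_ideal_def by blast+
      then show ?thesis
        using leib[of i x y] leib[of i y x] by (simp add: right_leibniz_algebra_br_zero[OF L])
    qed
    then show ?thesis unfolding ranL_def by blast
  qed
  with sub show ?thesis unfolding lie_ideal_def by blast
qed

lemma lie_ideal_Int_eq_zero_subset_AnnL:
  assumes "lie_ideal scale br I" "lie_ideal scale br J" "I \<inter> J = {0}"
  shows "J \<subseteq> AnnL br I"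
proof
  fix x assume x: "x \<in> J"
  have "br x y = 0 \<and> br y x = 0" if y: "y \<in> I" for y
  proof -
    have "br x y \<in> I \<inter> J" "br y x \<in> I \<inter> J"
      using assms(1,2) x y unfolding lie_ideal_def by blast+
    with assms(3) show ?thesis by blast
  qed
  then show "x \<in> AnnL br I" unfolding AnnL_def lanL_def ranL_def by blast
qed

lemma essential_ideal_if_AnnL_eq_zero:
  assumes L: "right_leibniz_algebra scale br" and I: "lie_ideal scale br I"
    and Ann: "AnnL br I = {0}"
  shows "essential_ideal scale br I"
  unfolding essential_ideal_def
proof (intro conjI I allI impI)
  fix J assume J: "lie_ideal scale br J \<and> J \<noteq> {0}"
  show "I \<inter> J \<noteq> {0}"
  proof
    assume "I \<inter> J = {0}"
    then have "J \<subseteq> {0}" using lie_ideal_Int_eq_zero_subset_AnnL I J Ann by blast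
    then show False using J lie_ideal_zero[OF L] by blast
  qed
qed

lemma essential_ideal_if_ranL_eq_zero:
  assumes L: "right_leibniz_algebra scale br" and I: "lie_ideal scale br I"
    and ran: "ranL br I = {0}"
  shows "essential_ideal scale br I"
proof -
  have "AnnL br I = {0}"
    using ran AnnL_subset_ranL[of br I] zero_in_AnnL[OF L, of I] by blast
  then show ?thesis by (rule essential_ideal_if_AnnL_eq_zero[OF L I])
qed

lemma brset_eq_zero:
  assumes "module scale" "\<And>x y. x \<in> J \<Longrightarrow> y \<in> K \<Longrightarrow> br x y = 0"
  shows "brset scale br J K = {0}"
proof -
  have "{br x y | x y. x \<in> J \<and> y \<in> K} \<subseteq> {0}" using assms(2) by blast
  then have "module.span scale {br x y | x y. x \<in> J \<and> y \<in> K} \<subseteq> {0}"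
    using module.span_minimal[OF assms(1)] module.subspace_single_0[OF assms(1)] by blast
  then show ?thesis
    unfolding brset_def using module.span_zero[OF assms(1)] by blast
qed

lemma semiprime_Int_ranL_eq_zero:
  assumes L: "right_leibniz_algebra scale br" and I: "lie_ideal scale br I"
    and sp: "semiprime scale br"
  shows "I \<inter> ranL br I = {0}"
proof -
  let ?K = "I \<inter> ranL br I"
  have K: "lie_ideal scale br ?K"
    using lie_ideal_Int[OF L I ranL_lie_ideal[OF L I]] .
  have "brset scale br ?K ?K = {0}"
    by (rule brset_eq_zero[OF right_leibniz_algebra_module[OF L]]) (auto simp: ranL_def)
  with sp K show ?thesis unfolding semiprime_def by blast
qed

lemma semiprime_essential_ideal_imp_ranL_eq_zero:
  assumes L: "right_leibniz_algebra scale br" and I: "lie_ideal scale br I"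
    and sp: "semiprime scale br" and ess: "essential_ideal scale br I"
  shows "ranL br I = {0}"
  using ess ranL_lie_ideal[OF L I] semiprime_Int_ranL_eq_zero[OF L I sp]
  unfolding essential_ideal_def by blast

theorem proposition2p8:
  fixes scale :: "'k::field \<Rightarrow> 'v::ab_group_add \<Rightarrow> 'v"
    and br :: "'v \<Rightarrow> 'v \<Rightarrow> 'v"
    and I :: "'v set"
  assumes L: "right_leibniz_algebra scale br"
    and I: "lie_ideal scale br I"
  shows "(AnnL br I = {0} \<longrightarrow> essential_ideal scale br I)
       \<and> (ranL br I = {0} \<longrightarrow> essential_ideal scale br I)
       \<and> (semiprime scale br \<longrightarrow>
            I \<inter> AnnL br I = {0} \<and> I \<inter> ranL br I = {0}
          \<and> (essential_ideal scale br I \<longleftrightarrow> AnnL br I = {0})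
          \<and> (essential_ideal scale br I \<longleftrightarrow> ranL br I = {0}))"
proof (intro conjI impI)
  show "AnnL br I = {0} \<Longrightarrow> essential_ideal scale br I"
    using essential_ideal_if_AnnL_eq_zero[OF L I] .
  show ran: "ranL br I = {0} \<Longrightarrow> essential_ideal scale br I"
    using essential_ideal_if_ranL_eq_zero[OF L I] .
  assume sp: "semiprime scale br"
  have ess_ran: "essential_ideal scale br I \<longleftrightarrow> ranL br I = {0}"
    using semiprime_essential_ideal_imp_ranL_eq_zero[OF L I sp] ran by blast
  then show "essential_ideal scale br I \<longleftrightarrow> ranL br I = {0}" .
  show "essential_ideal scale br I \<longleftrightarrow> AnnL br I = {0}"
    using ess_ran essential_ideal_if_AnnL_eq_zero[OF L I] AnnL_subset_ranL zero_in_AnnL[OF L]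
    by blast
  show ran_Int: "I \<inter> ranL br I = {0}"
    using semiprime_Int_ranL_eq_zero[OF L I sp] .
  show "I \<inter> AnnL br I = {0}"
    using ran_Int AnnL_subset_ranL zero_in_AnnL[OF L] lie_ideal_zero[OF L I] by blast
qed

end
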